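(* For every lazy expression $E$ and every nonempty polyhedron $C\subseteq\mathbb{R}^n$, the structurally defined bounds satisfy $\mathrm{LB}(E,C)\le\inf_{x\in C}[\![E]\!](x)\le\sup_{x\in C}[\![E]\!](x)\le\mathrm{UB}(E,C)$.
   Context: Lazy (scalar) expressions are generated by the grammar $E::=\mathtt{Affine}(w,b)\mid\mathtt{Sum}(\{E_1,\dots,E_k\})\mid\mathtt{Max}(\{E_1,\dots,E_k\})\mid\mathtt{Scale}(c,E)\mid\mathtt{Bias}(b,E)$ with $w\in\mathbb{R}^n$, $b,c\in\mathbb{R}$, and denote functions $\mathbb{R}^n\to\mathbb{R}$: $[\![\mathtt{Affine}(w,b)]\!](x)=w^\top x+b$, $[\![\mathtt{Sum}(\{E_i\})]\!]=\sum_i[\![E_i]\!]$, $[\![\mathtt{Max}(\{E_i\})]\!]=\max_i[\![E_i]\!]$, $[\![\mathtt{Scale}(c,E)]\!]=c[\![E]\!]$, $[\![\mathtt{Bias}(b,E)]\!]=[\![E]\!]+b$. A polyhedron is a finite intersection of closed halfspaces. The bounds (values in $\mathbb{R}\cup\{\pm\infty\}$, with $0\cdot(\pm\infty)=0$) are defined recursively: $\mathrm{LB}(\mathtt{Affine}(w,b),C)=\inf_{x\in C}(w^\top x+b)$, $\mathrm{UB}(\mathtt{Affine}(w,b),C)=\sup_{x\in C}(w^\top x+b)$; $\mathrm{LB}/\mathrm{UB}$ of $\mathtt{Sum}$ are the sums of the children's $\mathrm{LB}$/$\mathrm{UB}$; $\mathrm{LB}(\mathtt{Scale}(c,E),C)=c\,\mathrm{LB}(E,C)$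 if $c\ge0$ and $c\,\mathrm{UB}(E,C)$ if $c<0$, $\mathrm{UB}(\mathtt{Scale}(c,E),C)=c\,\mathrm{UB}(E,C)$ if $c\ge0$ and $c\,\mathrm{LB}(E,C)$ if $c<0$; $\mathrm{LB}/\mathrm{UB}(\mathtt{Bias}(b,E),C)=\mathrm{LB}/\mathrm{UB}(E,C)+b$; $\mathrm{LB}(\mathtt{Max}(\{E_i\}),C)=\max_i\mathrm{LB}(E_i,C)$, $\mathrm{UB}(\mathtt{Max}(\{E_i\}),C)=\max_i\mathrm{UB}(E_i,C)$. *)

theory Defs
  imports "HOL-Analysis.Analysis"
begin

text \<open>Lazy scalar expressions over R^n (n represented by the finite index type 'n).
  The finite families {E_1,...,E_k} are represented by lists.\<close>

datatype 'n lexpr =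
    Affine "real ^ 'n" real
  | LSum "'n lexpr list"
  | LMax "'n lexpr list"
  | Scale real "'n lexpr"
  | Bias real "'n lexpr"

text \<open>Well-formedness: every Max node has at least one child (max of an empty family is undefined).\<close>
fun wf_lexpr :: "'n::finite lexpr \<Rightarrow> bool" where
  "wf_lexpr (Affine w b) = True"
| "wf_lexpr (LSum es) = (\<forall>e\<in>set es. wf_lexpr e)"
| "wf_lexpr (LMax es) = (es \<noteq> [] \<and> (\<forall>e\<in>set es. wf_lexpr e))"
| "wf_lexpr (Scale c e) = wf_lexpr e"
| "wf_lexpr (Bias b e) = wf_lexpr e"

fun sem :: "'n::finite lexpr \<Rightarrow> real ^ 'n \<Rightarrow> real" where
  "sem (Affine w b) x = w \<bullet> x + b"
| "sem (LSum es) x = sum_list (map (\<lambda>e. sem e x) es)"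
| "sem (LMax es) x = Max (set (map (\<lambda>e. sem e x) es))"
| "sem (Scale c e) x = c * sem e x"
| "sem (Bias b e) x = sem e x + b"

text \<open>Structural bounds (LB, UB) in the extended reals; ereal multiplication
  satisfies 0 * (+-infinity) = 0.\<close>
fun bnds :: "'n::finite lexpr \<Rightarrow> (real ^ 'n) set \<Rightarrow> ereal \<times> ereal" where
  "bnds (Affine w b) C =
     ((INF x\<in>C. ereal (w \<bullet> x + b)), (SUP x\<in>C. ereal (w \<bullet> x + b)))"
| "bnds (LSum es) C =
     (sum_list (map (\<lambda>e. fst (bnds e C)) es), sum_list (map (\<lambda>e. snd (bnds e C)) es))"
| "bnds (LMax es) C =
     (Max (set (map (\<lambda>e. fst (bnds e C)) es)), Max (set (map (\<lambda>e. snd (bnds e C)) es)))"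
| "bnds (Scale c e) C =
     (if c \<ge> 0 then (ereal c * fst (bnds e C), ereal c * snd (bnds e C))
      else (ereal c * snd (bnds e C), ereal c * fst (bnds e C)))"
| "bnds (Bias b e) C = (fst (bnds e C) + ereal b, snd (bnds e C) + ereal b)"

definition LB :: "'n::finite lexpr \<Rightarrow> (real ^ 'n) set \<Rightarrow> ereal" where
  "LB e C = fst (bnds e C)"

definition UB :: "'n::finite lexpr \<Rightarrow> (real ^ 'n) set \<Rightarrow> ereal" where
  "UB e C = snd (bnds e C)"

end

theory Submission
  imports Defs
begin

text \<open>Each bound is a sound over-approximation pointwise, by structural induction: every
  constructor acts monotonically on intervals (a negative scale swaps the ends). Taking the
  infimum and supremum over the nonempty set \<open>C\<close> then gives the claim.\<close>

lemma ereal_mult_left_antimono: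
  fixes a b c :: ereal
  assumes "a \<le> b" and "c \<le> 0"
  shows "c * b \<le> c * a"
proof -
  have "(- c) * a \<le> (- c) * b"
    using assms by (intro ereal_mult_left_mono) auto
  then show ?thesis
    by simp
qed

lemma Max_image_mono:
  fixes f g :: "'a \<Rightarrow> 'b::linorder"
  assumes "finite S" and "S \<noteq> {}" and "\<And>x. x \<in> S \<Longrightarrow> f x \<le> g x"
  shows "Max (f ` S) \<le> Max (g ` S)"
  using assms by (auto simp: Max_le_iff intro: order.trans[OF _ Max_ge])

lemma LB_le_sem_le_UB:
  fixes E :: "'n::finite lexpr"
  assumes "wf_lexpr E" and "x \<in> C"
  shows "LB E C \<le> ereal (sem E x) \<and> ereal (sem E x) \<le> UB E C"
  using assms(1) unfolding LB_def UB_def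
proof (induction E)
  case (Affine w b)
  show ?case
    using \<open>x \<in> C\<close> by (auto intro: INF_lower SUP_upper)
next
  case (LSum es)
  then have "sum_list (map (\<lambda>e. fst (bnds e C)) es) \<le> sum_list (map (\<lambda>e. ereal (sem e x)) es)"
    and "sum_list (map (\<lambda>e. ereal (sem e x)) es) \<le> sum_list (map (\<lambda>e. snd (bnds e C)) es)"
    by (auto intro!: sum_list_mono simp del: sum_list_ereal)
  then show ?case
    by simp
next
  case (LMax es)
  have "Max ((\<lambda>e. fst (bnds e C)) ` set es) \<le> Max ((\<lambda>e. ereal (sem e x)) ` set es)"
    by (rule Max_image_mono) (use LMax in auto)
  moreover have "Max ((\<lambda>e. ereal (sem e x)) ` set es) \<le> Max ((\<lambda>e. snd (bnds e C)) ` set es)"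
    by (rule Max_image_mono) (use LMax in auto)
  moreover have "Max ((\<lambda>e. ereal (sem e x)) ` set es) = ereal (sem (LMax es) x)"
    using LMax.prems mono_Max_commute[of ereal "(\<lambda>e. sem e x) ` set es"]
    by (simp add: mono_def image_image)
  ultimately show ?case
    by (simp add: image_image)
next
  case (Scale c e)
  then have "fst (bnds e C) \<le> ereal (sem e x)" and "ereal (sem e x) \<le> snd (bnds e C)"
    by auto
  \<comment> \<open>Keep \<open>ereal c * ereal (sem e x)\<close> folded so the monotonicity rules match.\<close>
  then show ?case
    by (auto simp del: times_ereal.simps simp: times_ereal.simps(1)[symmetric]
        intro: ereal_mult_left_mono ereal_mult_left_antimono)
next
  case (Bias b e)
  then show ?case
    by (auto simp del: plus_ereal.simps simp: plus_ereal.simps(1)[symmetric]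
        intro: add_right_mono)
qed

theorem mainTheorem6:
  fixes E :: "'n::finite lexpr" and C :: "(real ^ 'n) set"
  assumes "wf_lexpr E" and "polyhedron C" and "C \<noteq> {}"
  shows "LB E C \<le> (INF x\<in>C. ereal (sem E x))
       \<and> (INF x\<in>C. ereal (sem E x)) \<le> (SUP x\<in>C. ereal (sem E x))
       \<and> (SUP x\<in>C. ereal (sem E x)) \<le> UB E C"
  using LB_le_sem_le_UB[OF \<open>wf_lexpr E\<close>] INF_le_SUP[OF \<open>C \<noteq> {}\<close>]
  by (auto intro: INF_greatest SUP_least)

end
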